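(* Let $A, B, C, F \in \mathbb{R}^{n\times n}$ with $A$ and $C$ non-singular, and let $I$ be the $n\times n$ identity matrix. Suppose that $$\rho\left((I\otimes CA^{-1}B)D\right) < 1$$ for every diagonal matrix $D = \mathrm{diag}(d_i) \in \mathbb{R}^{n^2\times n^2}$ with all $d_i \in [-1,1]$. Then the matrix equation $$AX + B\lvert CX\rvert = F$$ has exactly one solution $X \in \mathbb{R}^{n\times n}$.
   Context: $\otimes$ denotes the Kronecker product, $\rho(\cdot)$ the spectral radius, and $\lvert M\rvert$ the entrywise absolute value. *)

theory Defs
  imports "Jordan_Normal_Form.Spectral_Radius" "Jordan_Normal_Form.Gauss_Jordan_Elimination"
begin

(* Kronecker product: (P \<otimes> Q) at ((i,k),(j,l)) = P(i,j) * Q(k,l), with the pair (i,k)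
   encoded as row index i * dim_row Q + k (standard ordering). *)
definition kron_mat :: "'a::times mat \<Rightarrow> 'a mat \<Rightarrow> 'a mat" where
  "kron_mat P Q = mat (dim_row P * dim_row Q) (dim_col P * dim_col Q)
     (\<lambda>(i, j). P $$ (i div dim_row Q, j div dim_col Q) * Q $$ (i mod dim_row Q, j mod dim_col Q))"

definition abs_mat :: "'a::abs mat \<Rightarrow> 'a mat" where
  "abs_mat M = map_mat abs M"

definition real_spectral_radius :: "real mat \<Rightarrow> real" where
  "real_spectral_radius M = spectral_radius (map_mat complex_of_real M)"

end

(*
  With K = A\<inverse> and M = C K B, multiplying by the invertible C K turns the equation into
  Y + M |Y| = C K F for Y = C X, which decouples into the column equations y + M |y| = g.
  If I + M diag(d) were singular for some |d_i| \<le> 1, then -1 would be an eigenvalue of M diag(d),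
  hence of (I \<otimes> M)(I \<otimes> diag(d)), contradicting the spectral hypothesis. Since
  |a| - |b| = t (a - b) for some |t| \<le> 1, this nonsingularity makes y \<mapsto> y + M |y| injective;
  being continuous and positively homogeneous, it is then onto: by invariance of domain its image
  is an open cone containing 0, i.e. all of R^n.
*)

theory Submission
  imports Defs "HOL-Homology.Invariance_of_Domain"
begin

(* HOL-Analysis also uses $ for indexing; JNF vector indexing is meant throughout. *)
unbundle no vec_syntax

definition diag_matrix :: "nat \<Rightarrow> (nat \<Rightarrow> 'a::zero) \<Rightarrow> 'a mat" where
  "diag_matrix n d = Matrix.mat n n (\<lambda>(i, j). if i = j then d i else 0)"

lemma dim_diag_matrix [simp]: "dim_row (diag_matrix n d) = n" "dim_col (diag_matrix n d) = n"
  by (simp_all add: diag_matrix_def)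

lemma diag_matrix_carrier [simp]: "diag_matrix n d \<in> carrier_mat n n"
  by (simp add: carrier_matI)

lemma index_diag_matrix [simp]:
  "i < n \<Longrightarrow> j < n \<Longrightarrow> diag_matrix n d $$ (i, j) = (if i = j then d i else 0)"
  by (simp add: diag_matrix_def)

lemma diagonal_mat_diag_matrix: "diagonal_mat (diag_matrix n d)"
  by (simp add: diag_matrix_def diagonal_mat_def)

lemma index_mult_diag_matrix:
  fixes A :: "'a::semiring_0 mat"
  assumes "A \<in> carrier_mat m n" "i < m" "j < n"
  shows "(A * diag_matrix n d) $$ (i, j) = A $$ (i, j) * d j"
  using assms by (simp add: diag_matrix_def scalar_prod_def if_distrib cong: if_cong)

lemma dim_kron_mat [simp]:
  "dim_row (kron_mat P Q) = dim_row P * dim_row Q"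
  "dim_col (kron_mat P Q) = dim_col P * dim_col Q"
  by (simp_all add: kron_mat_def)

lemma index_kron_one_mat:
  fixes P :: "'a::semiring_1 mat"
  assumes "P \<in> carrier_mat n n" "p < m * n" "q < m * n"
  shows "kron_mat (1\<^sub>m m) P $$ (p, q)
    = (if p div n = q div n then P $$ (p mod n, q mod n) else 0)"
  using assms by (simp add: kron_mat_def less_mult_imp_div_less)

lemma kron_one_mult_diag_matrix:
  fixes M :: "'a::comm_semiring_1 mat"
  assumes M: "M \<in> carrier_mat n n"
  shows "kron_mat (1\<^sub>m m) M * diag_matrix (m * n) (\<lambda>p. d (p mod n))
    = kron_mat (1\<^sub>m m) (M * diag_matrix n d)"
proof (rule eq_matI)
  fix p q assume "p < dim_row (kron_mat (1\<^sub>m m) (M * diag_matrix n d))"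
    and "q < dim_col (kron_mat (1\<^sub>m m) (M * diag_matrix n d))"
  with M have pq: "p < m * n" "q < m * n" by auto
  then have "0 < n" by (cases n) auto
  have K: "kron_mat (1\<^sub>m m) M \<in> carrier_mat (m * n) (m * n)" using M by auto
  show "(kron_mat (1\<^sub>m m) M * diag_matrix (m * n) (\<lambda>p. d (p mod n))) $$ (p, q)
      = kron_mat (1\<^sub>m m) (M * diag_matrix n d) $$ (p, q)"
    using index_mult_diag_matrix[OF M, of "p mod n" "q mod n" d] \<open>0 < n\<close>
    by (simp add: index_mult_diag_matrix[OF K pq] index_kron_one_mat[OF M pq]
        index_kron_one_mat[OF mult_carrier_mat[OF M diag_matrix_carrier] pq])
qed (use M in auto)

lemma eigenvalue_kron_one_mat:
  fixes P :: "'a::comm_ring_1 mat"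
  assumes P: "P \<in> carrier_mat n n" and m: "0 < m" and ev: "eigenvalue P e"
  shows "eigenvalue (kron_mat (1\<^sub>m m) P) e"
proof -
  from ev P obtain v
    where v: "v \<in> carrier_vec n" "v \<noteq> 0\<^sub>v n" "P *\<^sub>v v = e \<cdot>\<^sub>v v"
    unfolding eigenvalue_def eigenvector_def by auto
  define u where "u = Matrix.vec (m * n) (\<lambda>p. if p < n then v $ p else 0)"
  have n_le: "q < n \<Longrightarrow> q < m * n" for q using m by (simp add: less_le_trans)
  have "kron_mat (1\<^sub>m m) P *\<^sub>v u = e \<cdot>\<^sub>v u"
  proof (rule eq_vecI)
    fix p assume "p < dim_vec (e \<cdot>\<^sub>v u)"
    then have p: "p < m * n" by (simp add: u_def)
    have "(kron_mat (1\<^sub>m m) P *\<^sub>v u) $ p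
        = (\<Sum>q\<in>{0..<m * n}. kron_mat (1\<^sub>m m) P $$ (p, q) * u $ q)"
      using p P by (simp add: scalar_prod_def u_def)
    also have "\<dots> = (\<Sum>q\<in>{0..<n}. kron_mat (1\<^sub>m m) P $$ (p, q) * v $ q)"
      using n_le m by (intro sum.mono_neutral_cong_right) (auto simp: u_def)
    also have "\<dots> = (if p < n then (P *\<^sub>v v) $ p else 0)"
      using p P v(1) n_le
      by (auto simp: index_kron_one_mat scalar_prod_def div_eq_0_iff intro!: sum.cong)
    also have "\<dots> = (e \<cdot>\<^sub>v u) $ p"
      using p v by (simp add: u_def)
    finally show "(kron_mat (1\<^sub>m m) P *\<^sub>v u) $ p = (e \<cdot>\<^sub>v u) $ p" .
  qed (use P in \<open>simp add: u_def\<close>)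
  moreover have "u \<noteq> 0\<^sub>v (m * n)"
  proof -
    from v(1,2) obtain i where "i < n" "v $ i \<noteq> 0" by fastforce
    with n_le show ?thesis by (auto simp: u_def dest!: arg_cong[of _ _ "\<lambda>w. w $ i"])
  qed
  moreover have "u \<in> carrier_vec (m * n)" by (simp add: u_def)
  ultimately show ?thesis
    using P unfolding eigenvalue_def eigenvector_def by (intro exI[of _ u]) auto
qed

lemma abs_eigenvalue_le_real_spectral_radius:
  assumes M: "M \<in> carrier_mat n n" and ev: "eigenvalue M e"
  shows "\<bar>e\<bar> \<le> real_spectral_radius M"
proof -
  have "complex_of_real e \<in> Spectral_Radius.spectrum (map_mat complex_of_real M)"
    using of_real_hom.eigenvalue_hom[OF M ev] by (simp add: Spectral_Radius.spectrum_def)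
  then show ?thesis
    using spectral_radius_mem_max(2)[of _ n, OF _ eigenvalue_imp_nonzero_dim[OF M ev]] M
    by (force simp: real_spectral_radius_def)
qed

definition unit_box_nonsingular :: "real mat \<Rightarrow> nat \<Rightarrow> bool" where
  "unit_box_nonsingular M n \<longleftrightarrow>
     (\<forall>d. (\<forall>i<n. \<bar>d i\<bar> \<le> 1) \<longrightarrow> det (1\<^sub>m n + M * diag_matrix n d) \<noteq> 0)"

lemma eigenvalue_neg_one_if_det_one_plus_eq_0:
  fixes P :: "'a::idom mat"
  assumes P: "P \<in> carrier_mat n n" and det: "det (1\<^sub>m n + P) = 0"
  shows "eigenvalue P (-1)"
proof -
  have "1\<^sub>m n + P \<in> carrier_mat n n" using P by simp
  with det obtain v
    where v: "v \<in> carrier_vec n" "v \<noteq> 0\<^sub>v n" "(1\<^sub>m n + P) *\<^sub>v v = 0\<^sub>v n"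
    using det_0_iff_vec_prod_zero by blast
  have "P *\<^sub>v v = (-1) \<cdot>\<^sub>v v"
  proof (rule eq_vecI)
    have sum0: "v + P *\<^sub>v v = 0\<^sub>v n"
      using v add_mult_distrib_mat_vec[OF one_carrier_mat P v(1)] by simp
    fix i assume "i < dim_vec ((-1) \<cdot>\<^sub>v v)"
    with v(1) P show "(P *\<^sub>v v) $ i = ((-1) \<cdot>\<^sub>v v) $ i"
      using arg_cong[OF sum0, of "\<lambda>x. x $ i"] by (simp add: eq_neg_iff_add_eq_0 add.commute)
  qed (use v(1) P in simp)
  with v P show ?thesis
    unfolding eigenvalue_def eigenvector_def by auto
qed

lemma unit_box_nonsingular_if_spectral_radius_less_1:
  assumes M: "M \<in> carrier_mat n n"
    and rho: "\<forall>D \<in> carrier_mat (n * n) (n * n).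
      diagonal_mat D \<and> (\<forall>i < n * n. \<bar>D $$ (i, i)\<bar> \<le> 1)
        \<longrightarrow> real_spectral_radius (kron_mat (1\<^sub>m n) M * D) < 1"
  shows "unit_box_nonsingular M n"
  unfolding unit_box_nonsingular_def
proof (intro allI impI notI)
  fix d :: "nat \<Rightarrow> real"
  assume d: "\<forall>i<n. \<bar>d i\<bar> \<le> 1"
    and singular: "det (1\<^sub>m n + M * diag_matrix n d) = 0"
  define D where "D = diag_matrix (n * n) (\<lambda>p. d (p mod n))"
  have MD: "M * diag_matrix n d \<in> carrier_mat n n" using M by simp
  have ev: "eigenvalue (M * diag_matrix n d) (-1)"
    by (rule eigenvalue_neg_one_if_det_one_plus_eq_0[OF MD singular])
  then have "0 < n" using eigenvalue_imp_nonzero_dim[OF MD] by blast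
  with ev have "eigenvalue (kron_mat (1\<^sub>m n) M * D) (-1)"
    using eigenvalue_kron_one_mat[OF MD] kron_one_mult_diag_matrix[OF M] by (simp add: D_def)
  then have "1 \<le> real_spectral_radius (kron_mat (1\<^sub>m n) M * D)"
    using abs_eigenvalue_le_real_spectral_radius[of _ "n * n"] M by (force simp: D_def)
  moreover have "real_spectral_radius (kron_mat (1\<^sub>m n) M * D) < 1"
    using d \<open>0 < n\<close>
    by (intro rho[rule_format]) (auto simp: D_def diagonal_mat_diag_matrix)
  ultimately show False by simp
qed

lemma homogeneous_inj_map_onto_Euclidean_space:
  fixes f :: "(nat \<Rightarrow> real) \<Rightarrow> nat \<Rightarrow> real"
  assumes cont: "continuous_map (Euclidean_space n) (Euclidean_space n) f"
    and inj: "inj_on f (topspace (Euclidean_space n))"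
    and hom: "\<And>c x. 0 < c \<Longrightarrow> x \<in> topspace (Euclidean_space n)
      \<Longrightarrow> f (\<lambda>i. c * x i) = (\<lambda>i. c * f x i)"
  shows "f ` topspace (Euclidean_space n) = topspace (Euclidean_space n)"
proof
  let ?T = "topspace (Euclidean_space n)"
  show "f ` ?T \<subseteq> ?T"
    using cont by (rule continuous_map_image_subset_topspace)
  show "?T \<subseteq> f ` ?T"
  proof
    fix g assume g: "g \<in> ?T"
    have opn: "openin (Euclidean_space n) (f ` ?T)"
      using cont inj by (intro invariance_of_domain_Euclidean_space) simp_all
    have ray: "continuous_map euclideanreal (Euclidean_space n) (\<lambda>t i. t * g i)"
    proof -
      have "(\<lambda>t i. t * g i) = (\<lambda>t i. if i < n then t * g i else 0)"
        using g by (auto simp: topspace_Euclidean_space fun_eq_iff not_less)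
      then show ?thesis
        by (simp add: continuous_map_componentwise_Euclidean_space continuous_on_mult_right)
    qed
    have "openin euclideanreal {t \<in> topspace euclideanreal. (\<lambda>i. t * g i) \<in> f ` ?T}"
      by (rule openin_continuous_map_preimage[OF ray opn])
    then have "open {t. (\<lambda>i. t * g i) \<in> f ` ?T}"
      by simp
    moreover have "f (\<lambda>i. 0) = (\<lambda>i. 0)"
      using hom[of 2 "\<lambda>i. 0"] by (simp add: topspace_Euclidean_space fun_eq_iff)
    then have "(\<lambda>i. 0 * g i) \<in> f ` ?T"
      by (simp add: topspace_Euclidean_space image_iff) (metis)
    ultimately obtain e
      where "0 < e" and e: "ball 0 e \<subseteq> {t. (\<lambda>i. t * g i) \<in> f ` ?T}"
      using open_contains_ball by blast
    have "e / 2 \<in> ball 0 e" using \<open>0 < e\<close> by simp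
    with e have "(\<lambda>i. e / 2 * g i) \<in> f ` ?T" by blast
    then obtain x where x: "x \<in> ?T" "f x = (\<lambda>i. e / 2 * g i)"
      by (metis imageE)
    have "f (\<lambda>i. (2 / e) * x i) = g"
      using hom[OF _ x(1), of "2 / e"] x(2) \<open>0 < e\<close> by simp
    moreover have "(\<lambda>i. (2 / e) * x i) \<in> ?T"
      using x(1) by (simp add: topspace_Euclidean_space)
    ultimately show "g \<in> f ` ?T" by (metis image_eqI)
  qed
qed

definition add_mult_abs_map :: "real mat \<Rightarrow> nat \<Rightarrow> (nat \<Rightarrow> real) \<Rightarrow> nat \<Rightarrow> real"
  where "add_mult_abs_map M n y =
    (\<lambda>i. if i < n then y i + (\<Sum>l<n. M $$ (i, l) * \<bar>y l\<bar>) else 0)"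

lemma continuous_map_add_mult_abs_map:
  "continuous_map (Euclidean_space n) (Euclidean_space n) (add_mult_abs_map M n)"
  unfolding add_mult_abs_map_def continuous_map_componentwise_Euclidean_space
    continuous_map_Euclidean_space_iff
  by (intro allI impI continuous_intros continuous_on_subset[OF continuous_on_product_coordinates])
    simp_all

lemma add_mult_abs_map_scale:
  "0 \<le> c \<Longrightarrow> add_mult_abs_map M n (\<lambda>i. c * y i) = (\<lambda>i. c * add_mult_abs_map M n y i)"
  by (auto simp: add_mult_abs_map_def abs_mult sum_distrib_left algebra_simps)

lemma abs_diff_abs_eq_mult: "\<exists>d. \<bar>d\<bar> \<le> 1 \<and> \<bar>a\<bar> - \<bar>b\<bar> = d * (a - b)" for a b :: real
proof (cases "a = b")
  case False
  then show ?thesis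
    using abs_triangle_ineq3[of a b]
    by (intro exI[of _ "(\<bar>a\<bar> - \<bar>b\<bar>) / (a - b)"]) (simp add: divide_le_eq_1)
qed (intro exI[of _ 0], simp)

lemma index_one_plus_mult_diag_matrix_vec:
  fixes M :: "'a::comm_ring_1 mat"
  assumes "M \<in> carrier_mat n n" "i < n"
  shows "((1\<^sub>m n + M * diag_matrix n d) *\<^sub>v Matrix.vec n w) $ i
    = w i + (\<Sum>l<n. M $$ (i, l) * (d l * w l))"
proof -
  have MD: "M * diag_matrix n d \<in> carrier_mat n n" using assms(1) by simp
  have "(1\<^sub>m n + M * diag_matrix n d) *\<^sub>v Matrix.vec n w
      = Matrix.vec n w + (M * diag_matrix n d) *\<^sub>v Matrix.vec n w"
    using add_mult_distrib_mat_vec[OF one_carrier_mat MD vec_carrier] by simp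
  then show ?thesis
    using assms
    by (simp add: scalar_prod_def index_mult_diag_matrix lessThan_atLeast0 mult.assoc
        del: index_mult_mat(1))
qed

lemma inj_on_add_mult_abs_map:
  assumes M: "M \<in> carrier_mat n n" and reg: "unit_box_nonsingular M n"
  shows "inj_on (add_mult_abs_map M n) (topspace (Euclidean_space n))"
proof (rule inj_onI)
  fix x y
  assume x: "x \<in> topspace (Euclidean_space n)" and y: "y \<in> topspace (Euclidean_space n)"
    and eq: "add_mult_abs_map M n x = add_mult_abs_map M n y"
  have "\<forall>l. \<exists>c. \<bar>c\<bar> \<le> 1 \<and> \<bar>x l\<bar> - \<bar>y l\<bar> = c * (x l - y l)"
    using abs_diff_abs_eq_mult by blast
  then obtain d
    where d: "\<And>l. \<bar>d l\<bar> \<le> 1" "\<And>l. \<bar>x l\<bar> - \<bar>y l\<bar> = d l * (x l - y l)"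
    by metis
  define w where "w = Matrix.vec n (\<lambda>l. x l - y l)"
  have "(1\<^sub>m n + M * diag_matrix n d) *\<^sub>v w = 0\<^sub>v n"
  proof (rule eq_vecI)
    fix i assume "i < dim_vec (0\<^sub>v n :: real Matrix.vec)"
    then have i: "i < n" by simp
    have "x i + (\<Sum>l<n. M $$ (i, l) * \<bar>x l\<bar>) = y i + (\<Sum>l<n. M $$ (i, l) * \<bar>y l\<bar>)"
      using fun_cong[OF eq, of i] i by (simp add: add_mult_abs_map_def)
    then show "((1\<^sub>m n + M * diag_matrix n d) *\<^sub>v w) $ i = 0\<^sub>v n $ i"
      using i index_one_plus_mult_diag_matrix_vec[OF M i] d(2)
      by (simp add: w_def flip: d(2)) (simp add: right_diff_distrib sum_subtractf)
  qed (use M in \<open>simp add: w_def\<close>)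
  moreover have "det (1\<^sub>m n + M * diag_matrix n d) \<noteq> 0"
    using reg d(1) unfolding unit_box_nonsingular_def by blast
  moreover have "1\<^sub>m n + M * diag_matrix n d \<in> carrier_mat n n" using M by simp
  moreover have "w \<in> carrier_vec n" by (simp add: w_def)
  ultimately have "w = 0\<^sub>v n"
    using det_0_iff_vec_prod_zero by blast
  show "x = y"
  proof
    fix i show "x i = y i"
    proof (cases "i < n")
      case True
      then show ?thesis
        using arg_cong[OF \<open>w = 0\<^sub>v n\<close>, of "\<lambda>v. v $ i"] by (simp add: w_def)
    next
      case False
      then show ?thesis using x y by (simp add: topspace_Euclidean_space)
    qed
  qed
qed

lemma bij_betw_add_mult_abs_map:
  assumes "M \<in> carrier_mat n n" "unit_box_nonsingular M n"
  shows "bij_betw (add_mult_abs_map M n) (topspace (Euclidean_space n)) (topspace (Euclidean_space n))"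
  unfolding bij_betw_def
  using inj_on_add_mult_abs_map[OF assms] homogeneous_inj_map_onto_Euclidean_space[OF
      continuous_map_add_mult_abs_map inj_on_add_mult_abs_map[OF assms]]
  by (simp add: add_mult_abs_map_scale)

lemma ex1_add_mult_abs_mat:
  fixes M G :: "real mat"
  assumes M: "M \<in> carrier_mat n n" and reg: "unit_box_nonsingular M n"
    and G: "G \<in> carrier_mat n k"
  shows "\<exists>!Y. Y \<in> carrier_mat n k \<and> Y + M * abs_mat Y = G"
proof -
  let ?T = "topspace (Euclidean_space n)"
  define column where "column Y j = (\<lambda>i. if i < n then Y $$ (i, j) else 0)"
    for Y :: "real mat" and j
  have column_in: "column Y j \<in> ?T" for Y j
    by (simp add: column_def topspace_Euclidean_space)
  have column_map: "column (Y + M * abs_mat Y) j = add_mult_abs_map M n (column Y j)"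
    if "Y \<in> carrier_mat n k" "j < k" for Y j
    using that M
    by (auto simp: column_def add_mult_abs_map_def abs_mat_def scalar_prod_def lessThan_atLeast0
        intro!: sum.cong)
  have column_eqI: "Y = Y'"
    if "Y \<in> carrier_mat n k" "Y' \<in> carrier_mat n k" "\<And>j. j < k \<Longrightarrow> column Y j = column Y' j"
    for Y Y'
  proof (rule eq_matI)
    fix i j assume "i < dim_row Y'" "j < dim_col Y'"
    then show "Y $$ (i, j) = Y' $$ (i, j)"
      using that(2) that(3)[of j, THEN fun_cong, of i] by (simp add: column_def)
  qed (use that in auto)
  have bij: "bij_betw (add_mult_abs_map M n) ?T ?T"
    by (rule bij_betw_add_mult_abs_map[OF M reg])
  show ?thesis
  proof (rule ex_ex1I)
    define Y where
      "Y = Matrix.mat n k (\<lambda>(i, j). inv_into ?T (add_mult_abs_map M n) (column G j) i)"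
    have "inv_into ?T (add_mult_abs_map M n) (column G j) \<in> ?T" for j
      using bij column_in[of G j] by (simp add: bij_betw_def inv_into_into)
    then have "column Y j = inv_into ?T (add_mult_abs_map M n) (column G j)" if "j < k" for j
      using that by (auto simp: column_def Y_def topspace_Euclidean_space fun_eq_iff)
    then have "column (Y + M * abs_mat Y) j = column G j" if "j < k" for j
      using that bij column_in[of G j] by (simp add: column_map Y_def bij_betw_def f_inv_into_f)
    then have "Y + M * abs_mat Y = G"
      using M G by (intro column_eqI) (auto simp: Y_def abs_mat_def)
    moreover have "Y \<in> carrier_mat n k" by (simp add: Y_def)
    ultimately show "\<exists>Y. Y \<in> carrier_mat n k \<and> Y + M * abs_mat Y = G" by blast
  next
    fix Y Y'
    assume Y: "Y \<in> carrier_mat n k \<and> Y + M * abs_mat Y = G"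
      and Y': "Y' \<in> carrier_mat n k \<and> Y' + M * abs_mat Y' = G"
    show "Y = Y'"
    proof (rule column_eqI)
      fix j assume "j < k"
      then have "add_mult_abs_map M n (column Y j) = add_mult_abs_map M n (column Y' j)"
        using Y Y' by (simp flip: column_map)
      then show "column Y j = column Y' j"
        using bij column_in by (simp add: bij_betw_def inj_on_def)
    qed (use Y Y' in auto)
  qed
qed

lemma the_mat_inverse:
  fixes A :: "'a::field mat"
  assumes A: "A \<in> carrier_mat n n" and det: "det A \<noteq> 0"
  shows "A * the (mat_inverse A) = 1\<^sub>m n" "the (mat_inverse A) * A = 1\<^sub>m n"
    "the (mat_inverse A) \<in> carrier_mat n n"
proof -
  obtain K where "mat_inverse A = Some K"
    using mat_inverse(1)[OF A] det_non_zero_imp_unit[OF A det] by fastforce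
  then show "A * the (mat_inverse A) = 1\<^sub>m n" "the (mat_inverse A) * A = 1\<^sub>m n"
    "the (mat_inverse A) \<in> carrier_mat n n"
    using mat_inverse(2)[OF A] by auto
qed

lemma mult_left_cancel_mat:
  fixes P :: "'a::field mat"
  assumes P: "P \<in> carrier_mat n n" "det P \<noteq> 0"
    and U: "U \<in> carrier_mat n k" and V: "V \<in> carrier_mat n k"
  shows "P * U = P * V \<longleftrightarrow> U = V"
proof
  assume eq: "P * U = P * V"
  define Q where "Q = the (mat_inverse P)"
  have Q: "Q * P = 1\<^sub>m n" "Q \<in> carrier_mat n n"
    using the_mat_inverse[OF P] by (simp_all add: Q_def)
  have "U = Q * (P * U)" using Q P U by (simp flip: assoc_mult_mat)
  also have "\<dots> = V" using Q P V by (simp add: eq flip: assoc_mult_mat)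
  finally show "U = V" .
qed simp

lemma ex1_mult_left_mat:
  fixes C :: "'a::field mat"
  assumes C: "C \<in> carrier_mat n n" "det C \<noteq> 0"
    and ex1: "\<exists>!Y. Y \<in> carrier_mat n k \<and> Q Y"
  shows "\<exists>!X. X \<in> carrier_mat n k \<and> Q (C * X)"
proof (rule ex_ex1I)
  from ex1 obtain Y where Y: "Y \<in> carrier_mat n k" "Q Y" by blast
  have "C * (the (mat_inverse C) * Y) = Y"
    using the_mat_inverse[OF C] C Y by (simp flip: assoc_mult_mat)
  with Y show "\<exists>X. X \<in> carrier_mat n k \<and> Q (C * X)"
    using the_mat_inverse(3)[OF C] by (metis mult_carrier_mat)
next
  fix X X'
  assume "X \<in> carrier_mat n k \<and> Q (C * X)" "X' \<in> carrier_mat n k \<and> Q (C * X')"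
  with ex1 C show "X = X'"
    by (metis mult_carrier_mat mult_left_cancel_mat)
qed

lemma premultiply_add_mult_eq:
  fixes A B C K :: "'a::field mat"
  assumes A: "A \<in> carrier_mat n n" and B: "B \<in> carrier_mat n n"
    and C: "C \<in> carrier_mat n n" "det C \<noteq> 0"
    and K: "K \<in> carrier_mat n n" "K * A = 1\<^sub>m n"
    and X: "X \<in> carrier_mat n k" and Z: "Z \<in> carrier_mat n k"
    and F: "F \<in> carrier_mat n k"
  shows "A * X + B * Z = F \<longleftrightarrow> C * X + C * K * B * Z = C * K * F"
proof -
  have "det K * det A = 1"
    using A K by (metis det_mult det_one)
  then have "det K \<noteq> 0"
    by (metis mult_zero_left zero_neq_one)
  then have CK: "det (C * K) \<noteq> 0"
    using C K(1) by (simp add: det_mult)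
  have "C * K * (A * X + B * Z) = C * K * (A * X) + C * K * (B * Z)"
    using A B C K X Z by (intro mult_add_distrib_mat) auto
  also have "C * K * (A * X) = C * (K * (A * X))"
    using A C K X by (intro assoc_mult_mat[of _ n n _ n _ k]) auto
  also have "K * (A * X) = X"
    using A K X by (simp flip: assoc_mult_mat)
  also have "C * K * (B * Z) = C * K * B * Z"
    using B C K Z by (intro assoc_mult_mat[symmetric, of _ n n _ n _ k]) auto
  finally show ?thesis
    using mult_left_cancel_mat[where n = n and k = k and U = "A * X + B * Z" and V = F, OF _ CK]
      A B C K X Z F
    by auto
qed

theorem theorem4p5:
  fixes A B C F :: "real mat" and n :: nat
  assumes "A \<in> carrier_mat n n" "B \<in> carrier_mat n n" "C \<in> carrier_mat n n" "F \<in> carrier_mat n n"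
    and "det A \<noteq> 0" and "det C \<noteq> 0"
    and "\<forall>D \<in> carrier_mat (n * n) (n * n). diagonal_mat D \<and> (\<forall>i < n * n. \<bar>D $$ (i, i)\<bar> \<le> 1)
           \<longrightarrow> real_spectral_radius (kron_mat (1\<^sub>m n) (C * the (mat_inverse A) * B) * D) < 1"
  shows "\<exists>!X. X \<in> carrier_mat n n \<and> A * X + B * abs_mat (C * X) = F"
proof -
  define K where "K = the (mat_inverse A)"
  define M where "M = C * K * B"
  have K: "K \<in> carrier_mat n n" "K * A = 1\<^sub>m n"
    using the_mat_inverse[OF assms(1,5)] by (simp_all add: K_def)
  have M: "M \<in> carrier_mat n n"
    using K(1) assms(2,3) by (simp add: M_def)
  have "unit_box_nonsingular M n"
    using unit_box_nonsingular_if_spectral_radius_less_1[OF M] assms(7) by (simp add: M_def K_def)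
  then have "\<exists>!Y. Y \<in> carrier_mat n n \<and> Y + M * abs_mat Y = C * K * F"
    using ex1_add_mult_abs_mat[OF M] K(1) assms(3,4) by simp
  then have "\<exists>!X. X \<in> carrier_mat n n \<and> C * X + M * abs_mat (C * X) = C * K * F"
    by (rule ex1_mult_left_mat[OF assms(3,6)])
  moreover have
    "A * X + B * abs_mat (C * X) = F \<longleftrightarrow> C * X + M * abs_mat (C * X) = C * K * F"
    if "X \<in> carrier_mat n n" for X
    using premultiply_add_mult_eq[OF assms(1-3,6) K that, of "abs_mat (C * X)"] that assms(3,4)
    by (simp add: M_def abs_mat_def)
  ultimately show ?thesis by (metis (no_types, lifting))
qed

end
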